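(* Let $\lambda >0$ and $t\ge 1$. For any $k\geq 3$, $$\Pr\big(|Z_k(t) - \mathbb{E}[Z_k(t)]| \geq \lambda\big) \leq 2e^{-\frac{\lambda^2}{72t}},$$ where $Z_k(t)$ is the number of vertices of degree $k$ in a Random Apollonian Network after $t$ steps.
   Context: A Random Apollonian Network (RAN) is generated as follows: start (at time $t=0$) with a single triangular face. At each step $t=1,2,\dots$, pick one of the current (bounded) triangular faces uniformly at random, insert a new vertex inside it, and connect it to the three vertices on the boundary of that face, subdividing the face into three new triangular faces. $Z_k(t)$ denotes the number of vertices of degree exactly $k$ after $t$ steps. *)

theory Defs
  imports "HOL-Probability.Probability"
begin

text \<open>A state of a Random Apollonian Network is its set of bounded triangular faces,
each face being the 3-element set of its vertices. Vertices are natural numbers: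
the initial triangle has vertices 0,1,2 and the vertex inserted at step t is t+2.\<close>

type_synonym ran_state = "nat set set"

definition new_faces :: "nat set \<Rightarrow> nat \<Rightarrow> nat set set" where
  "new_faces F v = (\<lambda>e. insert v e) ` {e. e \<subseteq> F \<and> card e = 2}"

definition ran_step :: "nat \<Rightarrow> ran_state \<Rightarrow> ran_state pmf" where
  "ran_step v S = map_pmf (\<lambda>F. (S - {F}) \<union> new_faces F v) (pmf_of_set S)"

fun ran :: "nat \<Rightarrow> ran_state pmf" where
  "ran 0 = return_pmf {{0, 1, 2}}"
| "ran (Suc t) = ran t \<bind> ran_step (t + 3)"

text \<open>Graph structure: every edge lies on some bounded face, so the neighbours of v
are the other vertices of faces containing v.\<close>

definition ran_vertices :: "ran_state \<Rightarrow> nat set" where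
  "ran_vertices S = \<Union>S"

definition ran_degree :: "ran_state \<Rightarrow> nat \<Rightarrow> nat" where
  "ran_degree S v = card {u. u \<noteq> v \<and> (\<exists>F\<in>S. v \<in> F \<and> u \<in> F)}"

definition Z :: "nat \<Rightarrow> ran_state \<Rightarrow> nat" where
  "Z k S = card {v \<in> ran_vertices S. ran_degree S v = k}"

end

theory Submission
  imports Defs "HOL-Probability.Hoeffding"
begin

text \<open>
  The proof is the martingale method. Let \<open>m(S, i, n)\<close> be the expected value of \<open>Z\<^sub>k\<close> after
  \<open>n\<close> further steps started from a state \<open>S\<close> reached after \<open>i\<close> steps. It is the average, over the
  face \<open>F\<close> split at the next step, of \<open>m(split S F, i + 1, n - 1)\<close>, and any two of these averaged
  values differ by at most 6: the processes obtained by inserting the new vertex into \<open>F\<^sub>1\<close> or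
  into \<open>F\<^sub>2\<close> can be coupled face by face so that they only differ by relabellings of the at
  most six vertices of \<open>F\<^sub>1 \<union> F\<^sub>2\<close>, which leaves the degree of every other vertex unchanged.
  By Hoeffding's lemma each step multiplies the moment generating function of \<open>Z\<^sub>k(t) - E Z\<^sub>k(t)\<close>
  by at most \<open>exp (9 s\<^sup>2 / 2)\<close>, and Chernoff's bound then gives the tail
  \<open>2 exp (-\<lambda>\<^sup>2 / (18 t))\<close>, which is stronger than the claimed one.
\<close>

section \<open>Averages and tail bounds\<close>

lemma abs_average_diff_le:
  fixes f g :: "'a \<Rightarrow> real"
  assumes "finite A" "A \<noteq> {}" and le: "\<And>x. x \<in> A \<Longrightarrow> \<bar>f x - g x\<bar> \<le> c"
  shows "\<bar>(\<Sum>x\<in>A. f x) / card A - (\<Sum>x\<in>A. g x) / card A\<bar> \<le> c"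
proof -
  have pos: "real (card A) > 0" using assms(1,2) by (simp add: card_gt_0_iff)
  have "\<bar>(\<Sum>x\<in>A. f x) - (\<Sum>x\<in>A. g x)\<bar> \<le> (\<Sum>x\<in>A. \<bar>f x - g x\<bar>)"
    by (simp add: sum_abs flip: sum_subtractf)
  also have "\<dots> \<le> card A * c" using sum_mono[OF le] by simp
  finally show ?thesis using pos by (simp add: field_simps flip: diff_divide_distrib)
qed

lemma Hoeffdings_lemma_average:
  fixes y :: "'a \<Rightarrow> real"
  assumes fin: "finite A" and ne: "A \<noteq> {}" and bounds: "\<And>x. x \<in> A \<Longrightarrow> y x \<in> {a..b}"
  shows "(\<Sum>x\<in>A. exp (h * (y x - (\<Sum>z\<in>A. y z) / card A))) / card A \<le> exp (h\<^sup>2 * (b - a)\<^sup>2 / 8)"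
proof -
  have pos: "(\<Sum>x\<in>A. exp (l * (g x - (\<Sum>z\<in>A. g z) / card A))) / card A \<le> exp (l\<^sup>2 * (d - c)\<^sup>2 / 8)"
    if "l > 0" "\<And>x. x \<in> A \<Longrightarrow> g x \<in> {c..d}" for l c d and g :: "'a \<Rightarrow> real"
  proof -
    define M where "M = measure_pmf (pmf_of_set A)"
    interpret interval_bounded_random_variable M g c d
      unfolding M_def
      by unfold_locales (use that fin ne in \<open>auto simp: AE_measure_pmf_iff\<close>)
    have E: "expectation g = (\<Sum>z\<in>A. g z) / card A"
      unfolding M_def using fin ne by (simp add: integral_pmf_of_set)
    have "ennreal (expectation (\<lambda>x. exp (l * (g x - expectation g))))
        = (\<integral>\<^sup>+ x. ennreal (exp (l * (g x - expectation g))) \<partial>M)"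
      unfolding M_def using fin ne
      by (intro nn_integral_eq_integral[symmetric] integrable_measure_pmf_finite) auto
    also have "\<dots> \<le> ennreal (exp (l\<^sup>2 * (d - c)\<^sup>2 / 8))"
      by (rule Hoeffdings_lemma_nn_integral[OF \<open>l > 0\<close>])
    finally show ?thesis
      unfolding E unfolding M_def using fin ne by (simp add: integral_pmf_of_set)
  qed
  consider "h > 0" | "h = 0" | "h < 0" by linarith
  then show ?thesis
  proof cases
    case 1
    then show ?thesis using pos bounds by blast
  next
    case 2
    then show ?thesis using fin ne by simp
  next
    case 3
    have "(\<Sum>x\<in>A. exp ((-h) * (- y x - (\<Sum>z\<in>A. - y z) / card A))) / card A
        \<le> exp ((-h)\<^sup>2 * (- a - - b)\<^sup>2 / 8)"
      using 3 bounds by (intro pos) auto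
    then show ?thesis by (simp add: sum_negf algebra_simps power2_eq_square)
  qed
qed

lemma prob_ge_le_of_mgf:
  fixes p :: "'a pmf" and X :: "'a \<Rightarrow> real"
  assumes fin: "finite (set_pmf p)" and lam: "lam > 0" and c: "c > 0"
    and mgf: "\<And>s. measure_pmf.expectation p (\<lambda>x. exp (s * (X x - \<mu>))) \<le> exp (c * s\<^sup>2)"
  shows "measure_pmf.prob p {x. lam \<le> X x - \<mu>} \<le> exp (- lam\<^sup>2 / (4 * c))"
proof -
  define s where "s = lam / (2 * c)"
  have s: "s > 0" using lam c by (simp add: s_def)
  have "measure_pmf.prob p {x \<in> UNIV. lam \<le> X x - \<mu>}
      \<le> exp (- s * lam) * (\<integral>x\<in>UNIV. exp (s * (X x - \<mu>)) \<partial>measure_pmf p)"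
    using fin by (intro measure_pmf.Chernoff_ineq_ge s)
      (auto simp: set_integrable_def integrable_measure_pmf_finite)
  also have "\<dots> \<le> exp (- s * lam) * exp (c * s\<^sup>2)"
    using mgf[of s] by (simp add: set_lebesgue_integral_def)
  also have "\<dots> = exp (- lam\<^sup>2 / (4 * c))"
    using c by (simp flip: exp_add add: s_def field_simps power2_eq_square)
  finally show ?thesis by simp
qed

lemma prob_abs_ge_le_of_mgf:
  fixes p :: "'a pmf" and X :: "'a \<Rightarrow> real"
  assumes fin: "finite (set_pmf p)" and lam: "lam > 0" and c: "c > 0"
    and mgf: "\<And>s. measure_pmf.expectation p (\<lambda>x. exp (s * (X x - \<mu>))) \<le> exp (c * s\<^sup>2)"
  shows "measure_pmf.prob p {x. lam \<le> \<bar>X x - \<mu>\<bar>} \<le> 2 * exp (- lam\<^sup>2 / (4 * c))"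
proof -
  let ?A = "{x. lam \<le> X x - \<mu>}" and ?B = "{x. lam \<le> - X x - (- \<mu>)}"
  have "{x. lam \<le> \<bar>X x - \<mu>\<bar>} = ?A \<union> ?B" by auto
  then have "measure_pmf.prob p {x. lam \<le> \<bar>X x - \<mu>\<bar>} \<le> measure_pmf.prob p ?A + measure_pmf.prob p ?B"
    by (simp add: measure_Un_le)
  moreover have "measure_pmf.prob p ?B \<le> exp (- lam\<^sup>2 / (4 * c))"
    using mgf[of "- s" for s] by (intro prob_ge_le_of_mgf[OF fin lam c]) (simp add: algebra_simps)
  ultimately show ?thesis using prob_ge_le_of_mgf[OF fin lam c mgf] by simp
qed

definition split_face :: "ran_state \<Rightarrow> nat set \<Rightarrow> nat \<Rightarrow> ran_state" where
  "split_face S F w = (S - {F}) \<union> new_faces F w"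

text \<open>After \<open>i\<close> steps every vertex is below \<open>i + 3\<close>, the label of the vertex inserted next.\<close>

definition ran_wf :: "nat \<Rightarrow> ran_state \<Rightarrow> bool" where
  "ran_wf i S \<longleftrightarrow> finite S \<and> S \<noteq> {} \<and> (\<forall>F\<in>S. card F = 3 \<and> F \<subseteq> {..<i + 3})"

lemma new_faces_iff: "G \<in> new_faces F w \<longleftrightarrow> (\<exists>e\<subseteq>F. card e = 2 \<and> G = insert w e)"
  unfolding new_faces_def by auto

lemma finite_new_faces: "finite F \<Longrightarrow> finite (new_faces F w)"
  unfolding new_faces_def by (rule finite_imageI, rule finite_subset[of _ "Pow F"]) auto

lemma new_faces_nonempty:
  assumes "card F = 3"
  shows "new_faces F w \<noteq> {}"
proof -
  obtain e where "e \<subseteq> F" "card e = 2"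
    using obtain_subset_with_card_n[of 2 F] assms by auto
  then have "insert w e \<in> new_faces F w" by (auto simp: new_faces_iff)
  then show ?thesis by blast
qed

lemma card_new_face:
  assumes "G \<in> new_faces F w" "finite F" "w \<notin> F"
  shows "card G = 3"
proof -
  obtain e where e: "e \<subseteq> F" "card e = 2" "G = insert w e"
    using assms(1) by (auto simp: new_faces_iff)
  moreover have "w \<notin> e" using e(1) assms(3) by auto
  ultimately show ?thesis using finite_subset[OF e(1) assms(2)] by simp
qed

lemma ran_wf_split_face:
  assumes wf: "ran_wf i S" and F: "F \<in> S"
  shows "ran_wf (Suc i) (split_face S F (i + 3))"
proof -
  have "card F = 3" and F_sub: "F \<subseteq> {..<i + 3}" using assms by (auto simp: ran_wf_def)
  then have fin: "finite F" and fresh: "i + 3 \<notin> F" and ne: "new_faces F (i + 3) \<noteq> {}"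
    using new_faces_nonempty by (auto intro: card_ge_0_finite)
  have new: "card G = 3 \<and> G \<subseteq> {..<Suc i + 3}" if "G \<in> new_faces F (i + 3)" for G
    using that F_sub card_new_face[OF that fin fresh] by (auto simp: new_faces_iff)
  have old: "card G = 3 \<and> G \<subseteq> {..<Suc i + 3}" if "G \<in> S" for G
  proof -
    have "card G = 3 \<and> G \<subseteq> {..<i + 3}" using that wf by (simp add: ran_wf_def)
    then show ?thesis by auto
  qed
  have "finite (split_face S F (i + 3))"
    using wf finite_new_faces[OF fin] by (simp add: ran_wf_def split_face_def)
  moreover have "split_face S F (i + 3) \<noteq> {}" using ne by (simp add: split_face_def)
  moreover have "\<forall>G\<in>split_face S F (i + 3). card G = 3 \<and> G \<subseteq> {..<Suc i + 3}"
    using old new unfolding split_face_def by blast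
  ultimately show ?thesis by (simp add: ran_wf_def)
qed

lemma bij_betw_new_faces:
  assumes bij: "bij_betw \<sigma> F F'" and w: "w \<notin> F" "w \<notin> F'"
  shows "bij_betw (\<lambda>G. insert w (\<sigma> ` (G - {w}))) (new_faces F w) (new_faces F' w)"
proof -
  have inj: "inj_on \<sigma> F" and img: "\<sigma> ` F = F'" using bij by (auto simp: bij_betw_def)
  have map_eq: "insert w (\<sigma> ` (insert w e - {w})) = insert w (\<sigma> ` e)" if "e \<subseteq> F" for e
    using that w(1) by (auto simp: insert_Diff_if)
  show ?thesis
  proof (rule bij_betw_imageI)
    show "inj_on (\<lambda>G. insert w (\<sigma> ` (G - {w}))) (new_faces F w)"
    proof (rule inj_onI)
      fix G G' assume "G \<in> new_faces F w" "G' \<in> new_faces F w"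
        and eq: "insert w (\<sigma> ` (G - {w})) = insert w (\<sigma> ` (G' - {w}))"
      then obtain e e' where e: "e \<subseteq> F" "G = insert w e" and e': "e' \<subseteq> F" "G' = insert w e'"
        by (auto simp: new_faces_iff)
      have "w \<notin> \<sigma> ` e" "w \<notin> \<sigma> ` e'" using e(1) e'(1) img w(2) by auto
      then have "\<sigma> ` e = \<sigma> ` e'"
        using eq map_eq[OF e(1)] map_eq[OF e'(1)] e(2) e'(2) by (simp add: insert_ident)
      then show "G = G'" using inj_on_image_eq_iff[OF inj e(1) e'(1)] e(2) e'(2) by simp
    qed
    show "(\<lambda>G. insert w (\<sigma> ` (G - {w}))) ` new_faces F w = new_faces F' w"
    proof (intro equalityI subsetI)
      fix H assume "H \<in> (\<lambda>G. insert w (\<sigma> ` (G - {w}))) ` new_faces F w"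
      then obtain e where e: "e \<subseteq> F" "card e = 2" "H = insert w (\<sigma> ` e)"
        using map_eq by (auto simp: new_faces_iff)
      moreover have "card (\<sigma> ` e) = card e" using card_image[OF inj_on_subset[OF inj e(1)]] .
      moreover have "\<sigma> ` e \<subseteq> F'" using e(1) img by auto
      ultimately show "H \<in> new_faces F' w" unfolding new_faces_iff by auto
    next
      fix H assume "H \<in> new_faces F' w"
      then obtain e' where e': "e' \<subseteq> F'" "card e' = 2" "H = insert w e'"
        by (auto simp: new_faces_iff)
      define e where "e = F \<inter> \<sigma> -` e'"
      have e_sub: "e \<subseteq> F" and \<sigma>e: "\<sigma> ` e = e'" using e'(1) img by (auto simp: e_def)
      have "card e = 2" using card_image[OF inj_on_subset[OF inj e_sub]] \<sigma>e e'(2) by simp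
      then have "insert w e \<in> new_faces F w" using e_sub by (auto simp: new_faces_iff)
      then show "H \<in> (\<lambda>G. insert w (\<sigma> ` (G - {w}))) ` new_faces F w"
        using map_eq[OF e_sub] \<sigma>e e'(3) by (metis image_eqI)
    qed
  qed
qed

fun ran_from :: "nat \<Rightarrow> ran_state \<Rightarrow> nat \<Rightarrow> ran_state pmf" where
  "ran_from i S 0 = return_pmf S"
| "ran_from i S (Suc n) = ran_step (i + 3) S \<bind> (\<lambda>S'. ran_from (Suc i) S' n)"

lemma ran_from_Suc_split_face:
  "ran_from i S (Suc n) = pmf_of_set S \<bind> (\<lambda>F. ran_from (Suc i) (split_face S F (i + 3)) n)"
  by (simp add: ran_step_def bind_map_pmf split_face_def)

lemma finite_set_pmf_ran_from: "ran_wf i S \<Longrightarrow> finite (set_pmf (ran_from i S n))"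
proof (induction n arbitrary: i S)
  case (Suc n)
  then have "finite S" "S \<noteq> {}" by (auto simp: ran_wf_def)
  then show ?case
    unfolding ran_from_Suc_split_face
    using Suc.IH[OF ran_wf_split_face[OF Suc.prems]] by auto
qed simp

lemma expectation_ran_from_Suc:
  fixes f :: "ran_state \<Rightarrow> real"
  assumes wf: "ran_wf i S"
  shows "measure_pmf.expectation (ran_from i S (Suc n)) f =
    (\<Sum>F\<in>S. measure_pmf.expectation (ran_from (Suc i) (split_face S F (i + 3)) n) f) / card S"
proof -
  have ne: "S \<noteq> {}" and fin: "finite S" using wf by (auto simp: ran_wf_def)
  have "finite (set_pmf (ran_from (Suc i) (split_face S F (i + 3)) n))" if "F \<in> S" for F
    using finite_set_pmf_ran_from[OF ran_wf_split_face[OF wf that]] .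
  then show ?thesis
    unfolding ran_from_Suc_split_face
    by (simp add: pmf_expectation_bind_pmf_of_set[OF ne fin] sum_divide_distrib divide_inverse_commute)
       (rule sum_distrib_left[symmetric])
qed

lemma ran_add: "ran (i + n) = ran i \<bind> (\<lambda>S. ran_from i S n)"
proof (induction n arbitrary: i)
  case (Suc n)
  have "ran (i + Suc n) = ran (Suc i + n)" by simp
  also have "\<dots> = ran (Suc i) \<bind> (\<lambda>S. ran_from (Suc i) S n)" by (rule Suc.IH)
  also have "\<dots> = ran i \<bind> (\<lambda>S. ran_from i S (Suc n))" by (simp add: bind_assoc_pmf)
  finally show ?case .
qed (simp add: bind_return_pmf')

lemma ran_eq_ran_from: "ran t = ran_from 0 {{0, 1, 2}} t"
  using ran_add[of 0 t] by (simp add: bind_return_pmf)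

lemma ran_wf_initial: "ran_wf 0 {{0, 1, 2}}"
  by (simp add: ran_wf_def)

definition expected_Z :: "nat \<Rightarrow> nat \<Rightarrow> ran_state \<Rightarrow> nat \<Rightarrow> real" where
  "expected_Z k i S n = measure_pmf.expectation (ran_from i S n) (\<lambda>S'. real (Z k S'))"

lemma expected_Z_0: "expected_Z k i S 0 = Z k S"
  by (simp add: expected_Z_def)

lemma expected_Z_Suc:
  "ran_wf i S \<Longrightarrow>
     expected_Z k i S (Suc n) = (\<Sum>F\<in>S. expected_Z k (Suc i) (split_face S F (i + 3)) n) / card S"
  unfolding expected_Z_def by (rule expectation_ran_from_Suc)

lemma finite_Union_ran_wf: "ran_wf i S \<Longrightarrow> finite (\<Union>S)"
  by (auto simp: ran_wf_def intro: finite_subset)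

section \<open>Coupling two states\<close>

lemma abs_card_diff_le_card:
  assumes "finite A1" "finite A2" "finite B" "A1 - B = A2 - B"
  shows "\<bar>real (card A1) - real (card A2)\<bar> \<le> card B"
proof -
  have le: "card X \<le> card Y + card B" if "finite Y" "X - B = Y - B" for X Y :: "'a set"
  proof -
    have "card X \<le> card ((Y - B) \<union> B)"
      using that assms(3) by (intro card_mono) auto
    also have "\<dots> \<le> card (Y - B) + card B" by (rule card_Un_le)
    also have "card (Y - B) \<le> card Y" using that(1) by (rule card_mono) auto
    finally show ?thesis by simp
  qed
  show ?thesis using le[OF assms(2,4)] le[OF assms(1) assms(4)[symmetric]] by linarith
qed

text \<open>
  \<open>S1\<close> and \<open>S2\<close> differ only inside the vertex set \<open>B\<close>: \<open>\<phi>\<close> matches their faces, and around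
  every vertex \<open>u \<notin> B\<close> the faces of \<open>S2\<close> are the images of those of \<open>S1\<close> under a relabelling
  \<open>\<pi> u\<close> that is injective on the star of \<open>u\<close> and fixes every vertex outside \<open>B\<close>; on a common
  face, all these relabellings agree.
\<close>

locale face_coupling =
  fixes B :: "nat set" and S1 S2 :: ran_state
    and \<phi> :: "nat set \<Rightarrow> nat set" and \<pi> :: "nat \<Rightarrow> nat \<Rightarrow> nat"
  assumes bij: "bij_betw \<phi> S1 S2"
    and diff_eq: "F \<in> S1 \<Longrightarrow> \<phi> F - B = F - B"
    and relabel_id: "x \<notin> B \<Longrightarrow> \<pi> u x = x"
    and image_relabel: "F \<in> S1 \<Longrightarrow> u \<in> F - B \<Longrightarrow> \<phi> F = \<pi> u ` F"
    and inj_relabel: "u \<notin> B \<Longrightarrow> inj_on (\<pi> u) (\<Union>{F\<in>S1. u \<in> F})"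
    and relabel_agree: "F \<in> S1 \<Longrightarrow> u \<in> F - B \<Longrightarrow> u' \<in> F - B \<Longrightarrow> x \<in> F \<Longrightarrow> \<pi> u x = \<pi> u' x"
begin

lemma faces_at_eq:
  assumes "u \<notin> B"
  shows "{G\<in>S2. u \<in> G} = \<phi> ` {F\<in>S1. u \<in> F}"
proof -
  have "u \<in> \<phi> F \<longleftrightarrow> u \<in> F" if "F \<in> S1" for F
    using diff_eq[OF that] assms by blast
  then show ?thesis
    using bij by (auto simp: bij_betw_def)
qed

lemma star_eq:
  assumes "u \<notin> B"
  shows "\<Union>{G\<in>S2. u \<in> G} = \<pi> u ` \<Union>{F\<in>S1. u \<in> F}"
proof -
  have "\<Union>{G\<in>S2. u \<in> G} = (\<Union>F\<in>{F\<in>S1. u \<in> F}. \<phi> F)"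
    using faces_at_eq[OF assms] by simp
  also have "\<dots> = (\<Union>F\<in>{F\<in>S1. u \<in> F}. \<pi> u ` F)"
    using image_relabel assms by auto
  finally show ?thesis by auto
qed

lemma mem_Union_iff: "u \<notin> B \<Longrightarrow> u \<in> \<Union>S2 \<longleftrightarrow> u \<in> \<Union>S1"
  using faces_at_eq[of u] by blast

lemma ran_degree_eq:
  assumes u: "u \<notin> B"
  shows "ran_degree S2 u = ran_degree S1 u"
proof -
  define star1 where "star1 = \<Union>{F\<in>S1. u \<in> F}"
  have nbrs: "{x. x \<noteq> u \<and> (\<exists>F\<in>S. u \<in> F \<and> x \<in> F)} = \<Union>{F\<in>S. u \<in> F} - {u}" for S :: ran_state
    by auto
  show ?thesis
  proof (cases "u \<in> star1")
    case True
    have inj: "inj_on (\<pi> u) star1" using inj_relabel[OF u] by (simp add: star1_def)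
    have "\<Union>{G\<in>S2. u \<in> G} - {u} = \<pi> u ` (star1 - {u})"
      using star_eq[OF u] inj_on_image_set_diff[OF inj, of star1 "{u}"] True relabel_id[OF u]
      by (simp add: star1_def)
    then show ?thesis
      using card_image[OF inj_on_subset[OF inj, of "star1 - {u}"]]
      by (simp add: ran_degree_def nbrs star1_def)
  next
    case False
    then have "{F\<in>S1. u \<in> F} = {}" by (auto simp: star1_def)
    then have "{G\<in>S2. u \<in> G} = {}" using faces_at_eq[OF u] by simp
    then show ?thesis using \<open>{F\<in>S1. u \<in> F} = {}\<close> by (simp add: ran_degree_def nbrs)
  qed
qed

lemma Z_diff_le:
  assumes "finite (\<Union>S1)" "finite (\<Union>S2)" "finite B"
  shows "\<bar>real (Z k S1) - real (Z k S2)\<bar> \<le> card B"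
proof -
  let ?A = "\<lambda>S. {v \<in> ran_vertices S. ran_degree S v = k}"
  have fin: "finite (?A S)" if "finite (\<Union>S)" for S
    by (rule finite_subset[OF _ that]) (auto simp: ran_vertices_def)
  have "?A S1 - B = ?A S2 - B"
    using mem_Union_iff ran_degree_eq by (auto simp: ran_vertices_def)
  then show ?thesis
    unfolding Z_def by (rule abs_card_diff_le_card[OF fin[OF assms(1)] fin[OF assms(2)] assms(3)])
qed

lemma exists_local_bijection:
  assumes F: "F \<in> S1" and fin: "finite F" "finite (\<phi> F)" and card: "card (\<phi> F) = card F"
  obtains \<sigma> where "bij_betw \<sigma> F (\<phi> F)"
    and "\<And>x. x \<in> F \<Longrightarrow> x \<notin> B \<Longrightarrow> \<sigma> x = x"
    and "\<And>x. x \<in> F \<Longrightarrow> x \<in> B \<Longrightarrow> \<sigma> x \<in> B"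
    and "\<And>u x. u \<in> F - B \<Longrightarrow> x \<in> F \<Longrightarrow> \<pi> u x = \<sigma> x"
proof (cases "F - B = {}")
  case True
  then have "\<phi> F \<subseteq> B" using diff_eq[OF F] by blast
  moreover obtain h where "bij_betw h F (\<phi> F)"
    using finite_same_card_bij[OF fin card[symmetric]] by blast
  ultimately show ?thesis using True by (intro that[of h]) (auto dest: bij_betwE)
next
  case False
  then obtain u0 where u0: "u0 \<in> F - B" by auto
  have inj: "inj_on (\<pi> u0) F"
    using inj_relabel[of u0] u0 F by (auto intro: inj_on_subset)
  have img: "\<pi> u0 ` F = \<phi> F" using image_relabel[OF F u0] by simp
  show ?thesis
  proof (rule that[of "\<pi> u0"])
    show "bij_betw (\<pi> u0) F (\<phi> F)" using inj img by (simp add: bij_betw_def)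
    show "\<And>x. x \<notin> B \<Longrightarrow> \<pi> u0 x = x" by (rule relabel_id)
    show "\<And>u x. u \<in> F - B \<Longrightarrow> x \<in> F \<Longrightarrow> \<pi> u x = \<pi> u0 x"
      using relabel_agree[OF F _ u0] by blast
    fix x assume x: "x \<in> F" "x \<in> B"
    show "\<pi> u0 x \<in> B"
    proof (rule ccontr)
      assume out: "\<pi> u0 x \<notin> B"
      then have "\<pi> u0 x \<in> F" using img x(1) diff_eq[OF F] by blast
      moreover have "\<pi> u0 (\<pi> u0 x) = \<pi> u0 x" using relabel_id[OF out] .
      ultimately have "\<pi> u0 x = x" using inj x(1) by (auto dest: inj_onD)
      then show False using out x(2) by simp
    qed
  qed
qed

end

locale face_coupling_split = face_coupling +
  fixes F :: "nat set" and w :: nat and \<sigma> :: "nat \<Rightarrow> nat"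
  assumes F_in: "F \<in> S1"
    and w_notin_B: "w \<notin> B" and w_fresh1: "w \<notin> \<Union>S1" and w_fresh2: "w \<notin> \<Union>S2"
    and bij_\<sigma>: "bij_betw \<sigma> F (\<phi> F)"
    and \<sigma>_id: "x \<in> F \<Longrightarrow> x \<notin> B \<Longrightarrow> \<sigma> x = x"
    and \<sigma>_B: "x \<in> F \<Longrightarrow> x \<in> B \<Longrightarrow> \<sigma> x \<in> B"
    and relabel_eq_\<sigma>: "u \<in> F - B \<Longrightarrow> x \<in> F \<Longrightarrow> \<pi> u x = \<sigma> x"
begin

definition split_map :: "nat set \<Rightarrow> nat set" where
  "split_map G = (if w \<in> G then insert w (\<sigma> ` (G - {w})) else \<phi> G)"

definition split_relabel :: "nat \<Rightarrow> nat \<Rightarrow> nat" where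
  "split_relabel u = (if u = w then (\<lambda>x. if x \<in> F then \<sigma> x else x) else \<pi> u)"

lemma \<phi>F_in: "\<phi> F \<in> S2"
  using bij_betwE[OF bij] F_in by blast

lemma w_notin_F: "w \<notin> F" and w_notin_\<phi>F: "w \<notin> \<phi> F"
  using w_fresh1 w_fresh2 F_in \<phi>F_in by auto

lemma \<sigma>_image: "\<sigma> ` F = \<phi> F" and inj_\<sigma>: "inj_on \<sigma> F"
  using bij_\<sigma> by (auto simp: bij_betw_def)

lemma split_face_cases:
  assumes "G \<in> split_face S1 F w"
  obtains "G \<in> S1" "w \<notin> G" | e where "e \<subseteq> F" "G = insert w e"
  using assms w_fresh1 by (auto simp: split_face_def new_faces_iff)

lemma split_map_new: "e \<subseteq> F \<Longrightarrow> split_map (insert w e) = insert w (\<sigma> ` e)"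
  using w_notin_F by (auto simp: split_map_def insert_Diff_if)

lemma bij_split_map: "bij_betw split_map (split_face S1 F w) (split_face S2 (\<phi> F) w)"
proof -
  have "bij_betw \<phi> (S1 - {F}) (S2 - {\<phi> F})"
    using bij_betw_DiffI[OF bij, of "{F}" "{\<phi> F}"] F_in \<phi>F_in by auto
  moreover have "split_map G = \<phi> G" if "G \<in> S1" for G
    using that w_fresh1 by (auto simp: split_map_def)
  ultimately have old: "bij_betw split_map (S1 - {F}) (S2 - {\<phi> F})"
    using bij_betw_cong[of "S1 - {F}" split_map \<phi>] by auto
  have new: "bij_betw split_map (new_faces F w) (new_faces (\<phi> F) w)"
    using bij_betw_new_faces[OF bij_\<sigma> w_notin_F w_notin_\<phi>F]
    by (rule bij_betw_cong[THEN iffD2, rotated]) (auto simp: split_map_def new_faces_iff)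
  have "(S2 - {\<phi> F}) \<inter> new_faces (\<phi> F) w = {}"
    using w_fresh2 by (auto simp: new_faces_iff)
  then show ?thesis
    unfolding split_face_def by (rule bij_betw_combine[OF old new])
qed

lemma \<sigma>_image_diff: "e \<subseteq> F \<Longrightarrow> \<sigma> ` e - B = e - B"
  using \<sigma>_id \<sigma>_B by (force intro: rev_image_eqI)

lemma split_map_diff:
  assumes "G \<in> split_face S1 F w"
  shows "split_map G - B = G - B"
  using assms
proof (cases rule: split_face_cases)
  case 1
  then show ?thesis using diff_eq by (simp add: split_map_def)
next
  case (2 e)
  have "split_map G - B = insert w (\<sigma> ` e - B)"
    using split_map_new[OF 2(1)] 2(2) w_notin_B by auto
  also have "\<dots> = G - B" using \<sigma>_image_diff[OF 2(1)] 2(2) w_notin_B by auto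
  finally show ?thesis .
qed

lemma split_relabel_id: "x \<notin> B \<Longrightarrow> split_relabel u x = x"
  using relabel_id \<sigma>_id by (simp add: split_relabel_def)

lemma split_relabel_new_face:
  assumes "e \<subseteq> F" "u \<in> insert w e - B" "x \<in> insert w e"
  shows "split_relabel u x = (if x \<in> F then \<sigma> x else x)"
proof (cases "u = w")
  case False
  then have "u \<in> F - B" using assms(1,2) by auto
  then show ?thesis
    using False assms relabel_eq_\<sigma> relabel_id[OF w_notin_B] by (auto simp: split_relabel_def)
qed (simp add: split_relabel_def)

lemma split_map_image:
  assumes G: "G \<in> split_face S1 F w" and u: "u \<in> G - B"
  shows "split_map G = split_relabel u ` G"
  using G
proof (cases rule: split_face_cases)
  case 1
  then have "u \<noteq> w" using u by auto
  then show ?thesis using 1 image_relabel u by (simp add: split_map_def split_relabel_def)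
next
  case (2 e)
  have "split_relabel u ` G = (\<lambda>x. if x \<in> F then \<sigma> x else x) ` insert w e"
    using split_relabel_new_face[OF 2(1)] u 2(2) by (auto intro: image_cong)
  also have "\<dots> = insert w (\<sigma> ` e)" using 2(1) w_notin_F by auto
  finally show ?thesis using split_map_new[OF 2(1)] 2(2) by simp
qed

lemma inj_split_relabel:
  assumes u: "u \<notin> B"
  shows "inj_on (split_relabel u) (\<Union>{G\<in>split_face S1 F w. u \<in> G})"
proof (cases "u = w")
  case True
  have "\<Union>{G\<in>split_face S1 F w. u \<in> G} \<subseteq> insert w F"
    using True w_fresh1 by (auto simp: split_face_def new_faces_iff)
  moreover have "inj_on (\<lambda>x. if x \<in> F then \<sigma> x else x) (insert w F)"
    using inj_\<sigma> \<sigma>_image w_notin_F w_notin_\<phi>F by (auto simp: inj_on_def)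
  ultimately have "inj_on (\<lambda>x. if x \<in> F then \<sigma> x else x) (\<Union>{G\<in>split_face S1 F w. u \<in> G})"
    by (rule inj_on_subset[rotated])
  then show ?thesis using True by (simp add: split_relabel_def)
next
  case False
  define U where "U = \<Union>{G\<in>S1. u \<in> G}"
  have "\<Union>{G\<in>split_face S1 F w. u \<in> G} \<subseteq> insert w U"
    using False F_in by (auto simp: U_def split_face_def new_faces_iff)
  moreover have "w \<notin> \<pi> u ` U"
  proof
    assume "w \<in> \<pi> u ` U"
    then obtain G where "G \<in> S1" "u \<in> G" "w \<in> \<pi> u ` G" by (auto simp: U_def)
    then have "w \<in> \<phi> G" using image_relabel u by simp
    moreover have "\<phi> G \<in> S2" using bij_betwE[OF bij] \<open>G \<in> S1\<close> by blast
    ultimately show False using w_fresh2 by blast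
  qed
  then have "inj_on (\<pi> u) (insert w U)"
    using inj_relabel[OF u] relabel_id[OF w_notin_B] by (auto simp: U_def)
  ultimately have "inj_on (\<pi> u) (\<Union>{G\<in>split_face S1 F w. u \<in> G})"
    by (rule inj_on_subset[rotated])
  then show ?thesis using False by (simp add: split_relabel_def)
qed

lemma split_relabel_agree:
  assumes G: "G \<in> split_face S1 F w" and u: "u \<in> G - B" and u': "u' \<in> G - B" and x: "x \<in> G"
  shows "split_relabel u x = split_relabel u' x"
  using G
proof (cases rule: split_face_cases)
  case 1
  then have "u \<noteq> w" "u' \<noteq> w" using u u' by auto
  then show ?thesis using relabel_agree[OF 1(1) u u' x] by (simp add: split_relabel_def)
next
  case (2 e)
  have mem: "u \<in> insert w e - B" "u' \<in> insert w e - B" "x \<in> insert w e"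
    using 2(2) u u' x by auto
  show ?thesis
    unfolding split_relabel_new_face[OF 2(1) mem(1,3)] split_relabel_new_face[OF 2(1) mem(2,3)] ..
qed

lemma face_coupling_split:
  "face_coupling B (split_face S1 F w) (split_face S2 (\<phi> F) w) split_map split_relabel"
  by unfold_locales
    (fact bij_split_map split_map_diff split_relabel_id split_map_image
       inj_split_relabel split_relabel_agree)+

end

lemma (in face_coupling) split_face_coupling:
  assumes wf1: "ran_wf i S1" and wf2: "ran_wf i S2" and B_sub: "B \<subseteq> {..<i + 3}" and F: "F \<in> S1"
  obtains \<phi>' \<pi>' where "face_coupling B (split_face S1 F (i + 3)) (split_face S2 (\<phi> F) (i + 3)) \<phi>' \<pi>'"
proof -
  have "\<phi> F \<in> S2" using bij_betwE[OF bij] F by blast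
  then have card: "card F = 3" "card (\<phi> F) = 3" using wf1 wf2 F by (auto simp: ran_wf_def)
  then obtain \<sigma> where \<sigma>: "bij_betw \<sigma> F (\<phi> F)"
    "\<And>x. x \<in> F \<Longrightarrow> x \<notin> B \<Longrightarrow> \<sigma> x = x" "\<And>x. x \<in> F \<Longrightarrow> x \<in> B \<Longrightarrow> \<sigma> x \<in> B"
    "\<And>u x. u \<in> F - B \<Longrightarrow> x \<in> F \<Longrightarrow> \<pi> u x = \<sigma> x"
    using exists_local_bijection[OF F] by (metis card_ge_0_finite zero_less_numeral)
  have fresh: "i + 3 \<notin> \<Union>S1" "i + 3 \<notin> \<Union>S2" using wf1 wf2 by (fastforce simp: ran_wf_def)+
  interpret face_coupling_split B S1 S2 \<phi> \<pi> F "i + 3" \<sigma>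
    by (intro face_coupling_split.intro face_coupling_split_axioms.intro face_coupling_axioms)
       (use F B_sub fresh \<sigma> in auto)
  show ?thesis using face_coupling_split by (rule that)
qed

section \<open>Bounded differences of conditional expectations\<close>

lemma expected_Z_coupled_diff:
  assumes "face_coupling B S1 S2 \<phi> \<pi>" "ran_wf i S1" "ran_wf i S2" "B \<subseteq> {..<i + 3}"
  shows "\<bar>expected_Z k i S1 n - expected_Z k i S2 n\<bar> \<le> card B"
  using assms
proof (induction n arbitrary: i S1 S2 \<phi> \<pi>)
  case 0
  interpret face_coupling B S1 S2 \<phi> \<pi> by (fact 0(1))
  show ?case
    using Z_diff_le finite_Union_ran_wf[OF 0(2)] finite_Union_ran_wf[OF 0(3)]
      finite_subset[OF 0(4)] by (simp add: expected_Z_0)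
next
  case (Suc n)
  interpret face_coupling B S1 S2 \<phi> \<pi> by (fact Suc.prems(1))
  let ?m = "\<lambda>S F. expected_Z k (Suc i) (split_face S F (i + 3)) n"
  have "(\<Sum>G\<in>S2. ?m S2 G) = (\<Sum>F\<in>S1. ?m S2 (\<phi> F))"
    by (rule sum.reindex_bij_betw[OF bij, symmetric])
  moreover have "card S2 = card S1" using bij_betw_same_card[OF bij] by simp
  moreover have "\<bar>?m S1 F - ?m S2 (\<phi> F)\<bar> \<le> card B" if F: "F \<in> S1" for F
  proof -
    obtain \<phi>' \<pi>' where "face_coupling B (split_face S1 F (i + 3)) (split_face S2 (\<phi> F) (i + 3)) \<phi>' \<pi>'"
      using split_face_coupling[OF Suc.prems(2-4) F] .
    moreover have "\<phi> F \<in> S2" using bij_betwE[OF bij] F by blast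
    ultimately show ?thesis
      using Suc.IH ran_wf_split_face Suc.prems(2-4) F by fastforce
  qed
  moreover have "finite S1" "S1 \<noteq> {}" using Suc.prems(2) by (auto simp: ran_wf_def)
  ultimately show ?case
    using abs_average_diff_le[of S1 "?m S1" "\<lambda>F. ?m S2 (\<phi> F)"]
    by (simp add: expected_Z_Suc Suc.prems(2,3))
qed

lemma expected_Z_split_diff:
  assumes wf: "ran_wf i S" and F1: "F1 \<in> S" and F2: "F2 \<in> S"
  shows "\<bar>expected_Z k (Suc i) (split_face S F1 (i + 3)) n
          - expected_Z k (Suc i) (split_face S F2 (i + 3)) n\<bar> \<le> 6"
proof -
  \<comment> \<open>Swapping \<open>F1\<close> and \<open>F2\<close> couples \<open>S\<close> with itself, matching the split of \<open>F1\<close>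
    with that of \<open>F2\<close>.\<close>
  define swap where "swap G = (if G = F1 then F2 else if G = F2 then F1 else G)" for G
  have B_sub: "F1 \<union> F2 \<subseteq> {..<i + 3}" and card: "card F1 = 3" "card F2 = 3"
    using wf F1 F2 by (auto simp: ran_wf_def)
  have "bij_betw swap S S"
    by (rule bij_betw_byWitness[where f' = swap]) (auto simp: swap_def F1 F2)
  then interpret face_coupling "F1 \<union> F2" S S swap "\<lambda>u x. x"
    by unfold_locales (auto simp: swap_def)
  obtain \<phi>' \<pi>' where
    "face_coupling (F1 \<union> F2) (split_face S F1 (i + 3)) (split_face S (swap F1) (i + 3)) \<phi>' \<pi>'"
    by (rule split_face_coupling[OF wf wf B_sub F1])
  moreover have "swap F1 = F2" by (simp add: swap_def)
  ultimately have "\<bar>expected_Z k (Suc i) (split_face S F1 (i + 3)) n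
      - expected_Z k (Suc i) (split_face S F2 (i + 3)) n\<bar> \<le> card (F1 \<union> F2)"
    using B_sub by (intro expected_Z_coupled_diff ran_wf_split_face wf F1 F2) auto
  also have "card (F1 \<union> F2) \<le> 6" using card_Un_le[of F1 F2] card by simp
  finally show ?thesis by simp
qed

lemma expected_Z_split_range:
  assumes wf: "ran_wf i S"
  obtains a where "\<And>F. F \<in> S \<Longrightarrow> expected_Z k (Suc i) (split_face S F (i + 3)) n \<in> {a..a + 6}"
proof -
  define m where "m F = expected_Z k (Suc i) (split_face S F (i + 3)) n" for F
  have fin: "finite S" and ne: "S \<noteq> {}" using wf by (auto simp: ran_wf_def)
  have "Min (m ` S) \<in> m ` S" using fin ne by (intro Min_in) auto
  then obtain F0 where F0: "F0 \<in> S" "m F0 = Min (m ` S)" by (metis imageE)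
  have "m F \<in> {m F0..m F0 + 6}" if "F \<in> S" for F
  proof -
    have "m F0 \<le> m F" using Min_le[of "m ` S" "m F"] fin that F0(2) by simp
    moreover have "\<bar>m F - m F0\<bar> \<le> 6"
      unfolding m_def by (rule expected_Z_split_diff[OF wf that F0(1)])
    ultimately show ?thesis by auto
  qed
  then show ?thesis unfolding m_def by (rule that)
qed

lemma mgf_ran_from_le:
  assumes "ran_wf i S"
  shows "measure_pmf.expectation (ran_from i S n) (\<lambda>S'. exp (h * (Z k S' - expected_Z k i S n)))
           \<le> exp (9 / 2 * h\<^sup>2 * n)"
  using assms
proof (induction n arbitrary: i S)
  case 0
  then show ?case by (simp add: expected_Z_0)
next
  case (Suc n)
  let ?split = "\<lambda>F. split_face S F (i + 3)"
  define m where "m F = expected_Z k (Suc i) (?split F) n" for F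
  define M where "M = expected_Z k i S (Suc n)"
  have fin: "finite S" and ne: "S \<noteq> {}" using Suc.prems by (auto simp: ran_wf_def)
  have M: "M = (\<Sum>F\<in>S. m F) / card S"
    unfolding M_def m_def using Suc.prems by (rule expected_Z_Suc)
  have step: "measure_pmf.expectation (ran_from (Suc i) (?split F) n) (\<lambda>S'. exp (h * (Z k S' - M)))
      \<le> exp (h * (m F - M)) * exp (9 / 2 * h\<^sup>2 * n)" if F: "F \<in> S" for F
  proof -
    have "exp (h * (Z k S' - M)) = exp (h * (m F - M)) * exp (h * (Z k S' - m F))" for S'
      by (simp flip: exp_add add: algebra_simps)
    then show ?thesis
      using Suc.IH[OF ran_wf_split_face[OF Suc.prems F]]
      by (simp add: m_def mult_left_mono)
  qed
  obtain a where "\<And>F. F \<in> S \<Longrightarrow> m F \<in> {a..a + 6}"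
    unfolding m_def using expected_Z_split_range[OF Suc.prems] by blast
  then have avg: "(\<Sum>F\<in>S. exp (h * (m F - M))) / card S \<le> exp (9 / 2 * h\<^sup>2)"
    using Hoeffdings_lemma_average[OF fin ne, of m a "a + 6" h]
    by (simp add: M power2_eq_square)
  have "measure_pmf.expectation (ran_from i S (Suc n)) (\<lambda>S'. exp (h * (Z k S' - M)))
      = (\<Sum>F\<in>S. measure_pmf.expectation (ran_from (Suc i) (?split F) n)
                   (\<lambda>S'. exp (h * (Z k S' - M)))) / card S"
    using Suc.prems by (rule expectation_ran_from_Suc)
  also have "\<dots> \<le> (\<Sum>F\<in>S. exp (h * (m F - M)) * exp (9 / 2 * h\<^sup>2 * n)) / card S"
    by (intro divide_right_mono sum_mono step) auto
  also have "\<dots> = (\<Sum>F\<in>S. exp (h * (m F - M))) / card S * exp (9 / 2 * h\<^sup>2 * n)"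
    by (simp add: sum_distrib_right)
  also have "\<dots> \<le> exp (9 / 2 * h\<^sup>2) * exp (9 / 2 * h\<^sup>2 * n)"
    using avg by (rule mult_right_mono) simp
  also have "\<dots> = exp (9 / 2 * h\<^sup>2 * Suc n)"
    by (simp flip: exp_add add: algebra_simps)
  finally show ?case by (simp add: M_def)
qed

theorem mainTheorem4:
  fixes lam :: real and t k :: nat
  assumes "lam > 0" and "t \<ge> 1" and "k \<ge> 3"
  shows "measure_pmf.prob (ran t)
           {S. \<bar>real (Z k S) - measure_pmf.expectation (ran t) (\<lambda>S. real (Z k S))\<bar> \<ge> lam}
         \<le> 2 * exp (- (lam ^ 2) / (72 * real t))"
proof -
  let ?p = "ran_from 0 {{0, 1, 2}} t"
  have t: "real t > 0" using assms(2) by simp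
  have "measure_pmf.prob ?p {S. lam \<le> \<bar>Z k S - expected_Z k 0 {{0, 1, 2}} t\<bar>}
      \<le> 2 * exp (- lam\<^sup>2 / (4 * (9 / 2 * t)))"
  proof (rule prob_abs_ge_le_of_mgf)
    show "finite (set_pmf ?p)" by (rule finite_set_pmf_ran_from[OF ran_wf_initial])
    show "measure_pmf.expectation ?p (\<lambda>S. exp (s * (Z k S - expected_Z k 0 {{0, 1, 2}} t)))
        \<le> exp (9 / 2 * t * s\<^sup>2)" for s
      using mgf_ran_from_le[OF ran_wf_initial, where h = s and n = t and k = k] by (simp add: mult_ac)
  qed (use assms t in auto)
  also have "\<dots> \<le> 2 * exp (- (lam ^ 2) / (72 * real t))"
    using t by (simp add: field_simps)
  finally show ?thesis
    by (simp add: ran_eq_ran_from expected_Z_def)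
qed

end
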